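(* Let $Y$ be a finite-dimensional real or complex vector space, let $\mathfrak g\subset\mathfrak{gl}(Y)$ be a Lie subalgebra (with bracket $[S,T]=ST-TS$, acting on $Y$ by $y\mapsto Ty$), and let $\omega$ be a bilinear form on $Y$ with $\omega(Tx,y)+\omega(x,Ty)=0$ for all $T\in\mathfrak g$, $x,y\in Y$. Define $F\colon Y\to\mathfrak g^*$ by $\langle F(y),T\rangle=\tfrac12\omega(Ty,y)$. Let $\alpha\colon\mathfrak g^*\to\mathfrak g$ and $f(y)=\alpha(F(y))y$. For $T\in\mathfrak g$ define $\beta(T)\colon\mathfrak g^*\to\mathfrak g^*$ by $\langle\beta(T)z,S\rangle=\langle z,[S,T]\rangle$ for all $S\in\mathfrak g$. Then $f$ is $F$-related to $g(z)=\beta(\alpha(z))z=-\operatorname{ad}^*_{\alpha(z)}z$, i.e. $F'(y)f(y)=g(F(y))$ for all $y\in Y$. Additionally, if $\mathfrak g$ is closed under $(S,T)\mapsto U_TS:=TST$, then $F''(f(y),f(y))=\gamma(F(y))$ for all $y\in Y$, where $\gamma(z)\in\mathfrak g^*$ is given by $\langle\gamma(z),S\rangle=-2\langle z,\alpha(z)S\alpha(z)\rangle$ for all $S\in\mathfrak g$, i.e. $\gamma(z)=-2U^*_{\alpha(z)}z$.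
   Context: $\langle\cdot,\cdot\rangle$ is the pairing between $\mathfrak g^*$ and $\mathfrak g$. $\operatorname{ad}^*_Tz$ is defined by $\langle\operatorname{ad}^*_Tz,S\rangle=\langle z,[T,S]\rangle$, and $U^*_Tz$ by $\langle U^*_Tz,S\rangle=\langle z,TST\rangle$. $F''$ denotes the constant symmetric bilinear second derivative of the quadratic map $F$. *)

theory Defs
  imports "HOL-Analysis.Analysis"
begin

text \<open>Y = 'k^'n (finite-dimensional, scalars 'k real or complex, generalised to any
real normed field); gl(Y) = 'k^'n^'n acting by matrix-vector product.
Elements of the dual g* are represented by functions on matrices; only their values on
the subalgebra G matter, so equalities in g* are stated for all S in G.\<close>

definition mat_scale :: "'k::field \<Rightarrow> 'k^'n^'n \<Rightarrow> 'k^'n^'n" where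
  "mat_scale c A = (\<chi> i j. c * A$i$j)"

definition lie_bracket :: "'k::field^'n^'n \<Rightarrow> 'k^'n^'n \<Rightarrow> 'k^'n^'n" where
  "lie_bracket S T = S ** T - T ** S"

definition lie_subalgebra :: "('k::field^'n^'n) set \<Rightarrow> bool" where
  "lie_subalgebra G \<longleftrightarrow> 0 \<in> G \<and> (\<forall>A\<in>G. \<forall>B\<in>G. A + B \<in> G)
     \<and> (\<forall>c. \<forall>A\<in>G. mat_scale c A \<in> G) \<and> (\<forall>A\<in>G. \<forall>B\<in>G. lie_bracket A B \<in> G)"

definition bilinear_form :: "('k::field^'n \<Rightarrow> 'k^'n \<Rightarrow> 'k) \<Rightarrow> bool" where
  "bilinear_form \<omega> \<longleftrightarrow>
     (\<forall>x x' y. \<omega> (x + x') y = \<omega> x y + \<omega> x' y) \<and> (\<forall>c x y. \<omega> (c *s x) y = c * \<omega> x y) \<and>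
     (\<forall>x y y'. \<omega> x (y + y') = \<omega> x y + \<omega> x y') \<and> (\<forall>c x y. \<omega> x (c *s y) = c * \<omega> x y)"

definition moment_map :: "('k::field^'n \<Rightarrow> 'k^'n \<Rightarrow> 'k) \<Rightarrow> 'k^'n \<Rightarrow> ('k^'n^'n \<Rightarrow> 'k)" where
  "moment_map \<omega> y = (\<lambda>T. (1/2) * \<omega> (T *v y) y)"

definition beta :: "'k::field^'n^'n \<Rightarrow> ('k^'n^'n \<Rightarrow> 'k) \<Rightarrow> ('k^'n^'n \<Rightarrow> 'k)" where
  "beta T z = (\<lambda>S. z (lie_bracket S T))"

definition second_deriv :: "('a::real_normed_vector \<Rightarrow> 'b::real_normed_vector) \<Rightarrow> 'a \<Rightarrow> 'a \<Rightarrow> 'a \<Rightarrow> 'b" where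
  "second_deriv \<phi> x u v = frechet_derivative (\<lambda>w. frechet_derivative \<phi> (at w) u) (at x) v"

end

theory Submission imports Defs begin

text \<open>For each \<open>S\<close>, \<open>y \<mapsto> \<langle>F(y),S\<rangle> = \<omega>(Sy,y)/2\<close> is a quadratic form, so its first
derivative is \<open>h \<mapsto> (\<omega>(Sy,h) + \<omega>(Sh,y))/2\<close> and its second derivative is the constant
symmetric form \<open>(u,v) \<mapsto> (\<omega>(Sv,u) + \<omega>(Su,v))/2\<close>. Evaluating these in the direction
\<open>f(y) = Ty\<close> with \<open>T = \<alpha>(F(y))\<close>, and moving one factor \<open>T\<close> to the other side of \<open>\<omega>\<close>
by its skewness, gives \<open>\<langle>F(y),[S,T]\<rangle>\<close> and \<open>-2\<langle>F(y),TST\<rangle>\<close> respectively.\<close>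

lemma bilinear_form_sum_left:
  assumes "bilinear_form (b :: 'k::field^'n \<Rightarrow> 'k^'n \<Rightarrow> 'k)" "finite A"
  shows "b (\<Sum>i\<in>A. f i) y = (\<Sum>i\<in>A. b (f i) y)"
  using assms(2)
proof induction
  case empty
  have "b ((0::'k) *s 0) y = 0 * b 0 y"
    using assms(1) unfolding bilinear_form_def by blast
  then show ?case by simp
next
  case (insert x F)
  then show ?case using assms(1) unfolding bilinear_form_def by simp
qed

lemma bilinear_form_sum_right:
  assumes "bilinear_form (b :: 'k::field^'n \<Rightarrow> 'k^'n \<Rightarrow> 'k)" "finite A"
  shows "b y (\<Sum>i\<in>A. f i) = (\<Sum>i\<in>A. b y (f i))"
  using assms(2)
proof induction
  case empty
  have "b y ((0::'k) *s 0) = 0 * b y 0"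
    using assms(1) unfolding bilinear_form_def by blast
  then show ?case by simp
next
  case (insert x F)
  then show ?case using assms(1) unfolding bilinear_form_def by simp
qed

lemma bilinear_form_basis_expansion:
  assumes "bilinear_form (b :: 'k::field^'n \<Rightarrow> 'k^'n \<Rightarrow> 'k)"
  shows "b x y = (\<Sum>i\<in>UNIV. \<Sum>j\<in>UNIV. x$i * y$j * b (axis i 1) (axis j 1))"
proof -
  have "b x y = b (\<Sum>i\<in>UNIV. x$i *s axis i 1) (\<Sum>j\<in>UNIV. y$j *s axis j 1)"
    by (simp add: basis_expansion)
  also have "\<dots> = (\<Sum>i\<in>UNIV. \<Sum>j\<in>UNIV. x$i * y$j * b (axis i 1) (axis j 1))"
    using assms
    unfolding bilinear_form_sum_left[OF assms finite_class.finite_UNIV]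
      bilinear_form_sum_right[OF assms finite_class.finite_UNIV]
    by (simp add: bilinear_form_def mult_ac) (rule sum.swap)
  finally show ?thesis .
qed

lemma scaleR_vec_eq_vector_scalar_mult:
  "r *\<^sub>R (x :: 'k::real_normed_field^'n) = (of_real r :: 'k) *s x"
  by (simp add: vec_eq_iff; simp add: scaleR_conv_of_real)

text \<open>The scalar field is only a real normed field, so the library's results on linear maps of
finite-dimensional real spaces do not apply; the bound comes from the basis expansion instead.\<close>

lemma bilinear_form_imp_bounded_bilinear:
  assumes "bilinear_form (b :: 'k::real_normed_field^'n \<Rightarrow> 'k^'n \<Rightarrow> 'k)"
  shows "bounded_bilinear b"
proof
  fix x x' y y' :: "'k^'n" and r :: real
  show "b (x + x') y = b x y + b x' y" "b x (y + y') = b x y + b x y'"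
    using assms unfolding bilinear_form_def by auto
  show "b (r *\<^sub>R x) y = r *\<^sub>R b x y" "b x (r *\<^sub>R y) = r *\<^sub>R b x y"
    using assms unfolding bilinear_form_def scaleR_vec_eq_vector_scalar_mult
    by (auto simp: scaleR_conv_of_real)
next
  let ?K = "\<Sum>i\<in>UNIV. \<Sum>j\<in>(UNIV::'n set). norm (b (axis i 1) (axis j 1))"
  show "\<exists>K. \<forall>x y. norm (b x y) \<le> norm x * norm y * K"
  proof (intro exI allI)
    fix x y :: "'k^'n"
    have "norm (b x y) \<le> (\<Sum>i\<in>UNIV. \<Sum>j\<in>UNIV. norm (x$i * y$j * b (axis i 1) (axis j 1)))"
      unfolding bilinear_form_basis_expansion[OF assms, of x y]
      by (rule order_trans[OF norm_sum sum_mono]) (rule norm_sum)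
    also have "\<dots> \<le> (\<Sum>i\<in>UNIV. \<Sum>j\<in>UNIV. norm x * norm y * norm (b (axis i 1) (axis j 1)))"
      unfolding norm_mult
      by (intro sum_mono mult_right_mono mult_mono Finite_Cartesian_Product.norm_nth_le) auto
    also have "\<dots> = norm x * norm y * ?K"
      by (simp add: sum_distrib_left)
    finally show "norm (b x y) \<le> norm x * norm y * ?K" .
  qed
qed

lemma bilinear_form_diff_left:
  assumes "bilinear_form (b :: 'k::field^'n \<Rightarrow> 'k^'n \<Rightarrow> 'k)"
  shows "b (x - x') y = b x y - b x' y"
proof -
  have "b ((x - x') + x') y = b (x - x') y + b x' y"
    using assms unfolding bilinear_form_def by blast
  then show ?thesis by simp
qed

lemma bilinear_form_matrix_left:
  assumes "bilinear_form (b :: 'k::field^'n \<Rightarrow> 'k^'n \<Rightarrow> 'k)"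
  shows "bilinear_form (\<lambda>x y. b (S *v x) y)"
  using assms unfolding bilinear_form_def
  by (simp add: matrix_vector_right_distrib vector_scalar_commute)

lemma has_derivative_moment_map:
  assumes "bilinear_form (\<omega> :: 'k::real_normed_field^'n \<Rightarrow> 'k^'n \<Rightarrow> 'k)"
  shows "((\<lambda>x. moment_map \<omega> x S) has_derivative
           (\<lambda>h. 1/2 * (\<omega> (S *v w) h + \<omega> (S *v h) w))) (at w)"
proof -
  have "bounded_bilinear (\<lambda>x y. \<omega> (S *v x) y)"
    by (rule bilinear_form_imp_bounded_bilinear[OF bilinear_form_matrix_left[OF assms]])
  from bounded_bilinear.FDERIV[OF this has_derivative_ident has_derivative_ident]
  have "((\<lambda>x. \<omega> (S *v x) x) has_derivative (\<lambda>h. \<omega> (S *v w) h + \<omega> (S *v h) w)) (at w)"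
    by simp
  from has_derivative_mult_right[OF this, of "1/2"] show ?thesis
    unfolding moment_map_def by simp
qed

lemma frechet_derivative_moment_map:
  assumes "bilinear_form (\<omega> :: 'k::real_normed_field^'n \<Rightarrow> 'k^'n \<Rightarrow> 'k)"
  shows "frechet_derivative (\<lambda>x. moment_map \<omega> x S) (at w) h
           = 1/2 * (\<omega> (S *v w) h + \<omega> (S *v h) w)"
  by (simp only: frechet_derivative_at[OF has_derivative_moment_map[OF assms, of S w], symmetric])

lemma has_derivative_frechet_derivative_moment_map:
  assumes "bilinear_form (\<omega> :: 'k::real_normed_field^'n \<Rightarrow> 'k^'n \<Rightarrow> 'k)"
  shows "((\<lambda>w. frechet_derivative (\<lambda>x. moment_map \<omega> x S) (at w) h) has_derivative
           (\<lambda>v. 1/2 * (\<omega> (S *v v) h + \<omega> (S *v h) v))) (at y)"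
proof -
  have "bounded_bilinear (\<lambda>x y. \<omega> (S *v x) y)"
    by (rule bilinear_form_imp_bounded_bilinear[OF bilinear_form_matrix_left[OF assms]])
  then have "bounded_linear (\<lambda>v. \<omega> (S *v v) h + \<omega> (S *v h) v)"
    by (intro bounded_linear_add bounded_bilinear.bounded_linear_left
          bounded_bilinear.bounded_linear_right)
  then have "bounded_linear (\<lambda>v. 1/2 * (\<omega> (S *v v) h + \<omega> (S *v h) v))"
    by (rule bounded_linear_compose[OF bounded_linear_mult_right])
  then show ?thesis
    unfolding frechet_derivative_moment_map[OF assms]
    by (rule bounded_linear_imp_has_derivative)
qed

lemma second_deriv_moment_map:
  assumes "bilinear_form (\<omega> :: 'k::real_normed_field^'n \<Rightarrow> 'k^'n \<Rightarrow> 'k)"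
  shows "second_deriv (\<lambda>x. moment_map \<omega> x S) y u v = 1/2 * (\<omega> (S *v v) u + \<omega> (S *v u) v)"
  unfolding second_deriv_def
  by (simp only: frechet_derivative_at[OF has_derivative_frechet_derivative_moment_map[OF assms, of S u y],
        symmetric])

lemma frechet_derivative_moment_map_orbit:
  assumes bf: "bilinear_form (\<omega> :: 'k::real_normed_field^'n \<Rightarrow> 'k^'n \<Rightarrow> 'k)"
    and skew: "\<And>x y. \<omega> (T *v x) y + \<omega> x (T *v y) = 0"
  shows "frechet_derivative (\<lambda>x. moment_map \<omega> x S) (at y) (T *v y)
           = beta T (moment_map \<omega> y) S"
proof -
  have "frechet_derivative (\<lambda>x. moment_map \<omega> x S) (at y) (T *v y)
          = 1/2 * (\<omega> (S *v y) (T *v y) + \<omega> (S *v (T *v y)) y)"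
    by (rule frechet_derivative_moment_map[OF bf])
  also have "\<omega> (S *v y) (T *v y) = - \<omega> (T *v (S *v y)) y"
    using skew[of "S *v y" y] by (simp add: eq_neg_iff_add_eq_0 add.commute)
  also have "- \<omega> (T *v (S *v y)) y + \<omega> (S *v (T *v y)) y = \<omega> (lie_bracket S T *v y) y"
    by (simp add: lie_bracket_def matrix_vector_mult_diff_rdistrib matrix_vector_mul_assoc
        bilinear_form_diff_left[OF bf])
  finally show ?thesis
    by (simp add: beta_def moment_map_def)
qed

lemma second_deriv_moment_map_orbit:
  assumes bf: "bilinear_form (\<omega> :: 'k::real_normed_field^'n \<Rightarrow> 'k^'n \<Rightarrow> 'k)"
    and skew: "\<And>x y. \<omega> (T *v x) y + \<omega> x (T *v y) = 0"
  shows "second_deriv (\<lambda>x. moment_map \<omega> x S) y (T *v y) (T *v y)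
           = - 2 * moment_map \<omega> y (T ** S ** T)"
proof -
  have "second_deriv (\<lambda>x. moment_map \<omega> x S) y (T *v y) (T *v y)
          = 1/2 * (\<omega> (S *v (T *v y)) (T *v y) + \<omega> (S *v (T *v y)) (T *v y))"
    by (rule second_deriv_moment_map[OF bf])
  also have "\<omega> (S *v (T *v y)) (T *v y) = - \<omega> (T *v (S *v (T *v y))) y"
    using skew[of "S *v (T *v y)" y] by (simp add: eq_neg_iff_add_eq_0 add.commute)
  also have "T *v (S *v (T *v y)) = (T ** S ** T) *v y"
    by (simp add: matrix_vector_mul_assoc matrix_mul_assoc)
  finally show ?thesis
    by (simp add: moment_map_def)
qed

theorem theorem3p8:
  fixes G :: "('k::real_normed_field^'n^'n) set"
    and \<omega> :: "'k^'n \<Rightarrow> 'k^'n \<Rightarrow> 'k"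
    and \<alpha> :: "('k^'n^'n \<Rightarrow> 'k) \<Rightarrow> 'k^'n^'n"
  assumes "lie_subalgebra G"
    and "bilinear_form \<omega>"
    and "\<forall>T\<in>G. \<forall>x y. \<omega> (T *v x) y + \<omega> x (T *v y) = 0"
    and "\<forall>z. \<alpha> z \<in> G"
  shows "(\<forall>y. \<forall>S\<in>G.
            (\<lambda>x. moment_map \<omega> x S) differentiable (at y) \<and>
            frechet_derivative (\<lambda>x. moment_map \<omega> x S) (at y) (\<alpha> (moment_map \<omega> y) *v y)
              = beta (\<alpha> (moment_map \<omega> y)) (moment_map \<omega> y) S)
       \<and> ((\<forall>S\<in>G. \<forall>T\<in>G. T ** S ** T \<in> G) \<longrightarrow>
          (\<forall>y. \<forall>S\<in>G.
            (\<lambda>w. frechet_derivative (\<lambda>x. moment_map \<omega> x S) (at w) (\<alpha> (moment_map \<omega> y) *v y))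
              differentiable (at y) \<and>
            second_deriv (\<lambda>x. moment_map \<omega> x S) y
                (\<alpha> (moment_map \<omega> y) *v y) (\<alpha> (moment_map \<omega> y) *v y)
              = - 2 * moment_map \<omega> y (\<alpha> (moment_map \<omega> y) ** S ** \<alpha> (moment_map \<omega> y))))"
proof -
  have skew: "\<omega> (\<alpha> z *v x) y + \<omega> x (\<alpha> z *v y) = 0" for z x y
    using assms(3,4) by blast
  have "(\<lambda>x. moment_map \<omega> x S) differentiable (at y)" for S y
    using has_derivative_moment_map[OF assms(2)] by (rule differentiableI)
  moreover have "(\<lambda>w. frechet_derivative (\<lambda>x. moment_map \<omega> x S) (at w) h) differentiable (at y)"
    for S h y
    using has_derivative_frechet_derivative_moment_map[OF assms(2)] by (rule differentiableI)
  ultimately show ?thesis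
    by (simp add: frechet_derivative_moment_map_orbit[OF assms(2) skew]
        second_deriv_moment_map_orbit[OF assms(2) skew])
qed

end
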